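(* Let $X=\mathcal{X}(\mathfrak{D})$ be a $\mathbb{Q}$-Gorenstein Fano cone singularity given by a proper polyhedral divisor $\mathfrak{D}$ on $\mathbb{P}^1$ with tail cone $\sigma$, and let $n=\dim X$. Then for every $y\in\mathbb{P}^1$ and every $\xi$ in the interior of $\sigma$, the volume of $(X,\xi)$ equals the volume of the affine toric variety $X_{\sigma_y}$ at $(\xi,0)\in N_\mathbb{R}\times\mathbb{R}$; equivalently, $\mathrm{vol}_X(\xi)$ equals (with the same dimensional normalisation as in the toric case) the volume of the polytope $\sigma_y^\vee((\xi,0))=\{w\in\sigma_y^\vee : \langle w,(\xi,0)\rangle\le 1\}$ with respect to the lattice $M\times\mathbb{Z}$.
   Context: Let $T$ be an algebraic torus with character lattice $M$, cocharacter lattice $N$, pairing $\langle\cdot,\cdot\rangle$, and vector spaces $M_\mathbb{R},N_\mathbb{R}$. Let $\sigma\subset N_\mathbb{R}$ be a full-dimensional pointed rational polyhedral cone. A polyhedral divisor on $\mathbb{P}^1$ with tail cone $\sigma$ is a formal sum $\mathfrak{D}=\sum_{y\in\mathbb{P}^1}\mathfrak{D}_y\cdot y$ where each $\mathfrak{D}_y\subset N_\mathbb{R}$ is a polyhedron with rational vertices and recession cone $\sigma$, and $\mathfrak{D}_y=\sigma$ for all but finitely many $y$. Its degree is the Minkowski sum $\deg\mathfrak{D}=\sum_y\mathfrak{D}_y$; $\mathfrak{D}$ is proper if $\deg\mathfrak{D}\subsetneq\sigma$. For $u\in\sigma^\vee\cap M$ put $\mathfrak{D}(u)=\sum_y(\min_{v\in\mathfrak{D}_y}\langle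 u,v\rangle)\cdot y$. The affine variety $\mathcal{X}(\mathfrak{D})=\mathrm{Spec}\bigoplus_{u\in\sigma^\vee\cap M}H^0(\mathbb{P}^1,\mathcal{O}(\lfloor\mathfrak{D}(u)\rfloor))$ carries the $T$-action from the $M$-grading; its Reeb cone is the interior of $\sigma$. For $y\in\mathbb{P}^1$ define the cone $\sigma_y=\mathrm{pos}\big((\sigma\times\{0\})\cup(\mathfrak{D}_y\times\{1\})\cup((\textstyle\sum_{z\ne y}\mathfrak{D}_z)\times\{-1\})\big)\subset N_\mathbb{R}\times\mathbb{R}$, and $X_{\sigma_y}$ the associated affine toric variety with torus having cocharacter lattice $N\times\mathbb{Z}$. For a cone singularity with grading $\mathbb{C}[X]=\bigoplus R_u$ and Reeb field $\xi$, the index character is $F(\xi,t)=\sum_u e^{-t\langle u,\xi\rangle}\dim R_u$, with expansion $F(\xi,t)=\frac{a_0(\xi)(n-1)!}{t^n}+\frac{a_1(\xi)(n-2)!}{t^{n-1}}+O(t^{2-n})$; the volume is $\mathrm{vol}_X(\xi)=a_0(\xi)$. For a toric cone singularity with cone $\sigma$ this volume is proportional, by a constant depending only on $n$, to the volume of $\sigma^\vee(\xi)=\{u\in\sigma^\vee:\langle u,\xi\rangle\le1\}$. *)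

theory Defs
  imports "HOL-Analysis.Analysis"
begin

text \<open>Lattices: M = N = Z^r inside real^'r; the pairing is the inner product.
  Points of P^1 are modelled by complex option (None = infinity).\<close>

definition int_vec :: "real^'r \<Rightarrow> bool" where
  "int_vec x \<longleftrightarrow> (\<forall>i. x $ i \<in> \<int>)"

definition rat_vec :: "real^'r \<Rightarrow> bool" where
  "rat_vec x \<longleftrightarrow> (\<forall>i. x $ i \<in> \<rat>)"

definition pointed_rat_cone :: "(real^'r) set \<Rightarrow> bool" where
  "pointed_rat_cone \<sigma> \<longleftrightarrow>
     (\<exists>S. finite S \<and> (\<forall>x\<in>S. int_vec x) \<and> \<sigma> = convex_cone hull S)
     \<and> interior \<sigma> \<noteq> {} \<and> \<sigma> \<inter> uminus ` \<sigma> = {0}"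

definition polyhedron_with_tail :: "(real^'r) set \<Rightarrow> (real^'r) set \<Rightarrow> bool" where
  "polyhedron_with_tail P \<sigma> \<longleftrightarrow>
     (\<exists>V. finite V \<and> V \<noteq> {} \<and> (\<forall>v\<in>V. rat_vec v) \<and>
          P = {p + q | p q. p \<in> convex hull V \<and> q \<in> \<sigma>})"

definition supp_pd :: "(real^'r) set \<Rightarrow> (complex option \<Rightarrow> (real^'r) set) \<Rightarrow> complex option set" where
  "supp_pd \<sigma> D = {y. D y \<noteq> \<sigma>}"

definition polyhedral_divisor :: "(real^'r) set \<Rightarrow> (complex option \<Rightarrow> (real^'r) set) \<Rightarrow> bool" where
  "polyhedral_divisor \<sigma> D \<longleftrightarrow> pointed_rat_cone \<sigma> \<and>
     (\<forall>y. polyhedron_with_tail (D y) \<sigma>) \<and> finite (supp_pd \<sigma> D)"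

text \<open>Minkowski sum of the D_y for y in T (all other summands are sigma, and sigma+sigma=sigma).\<close>
definition msum_pd :: "(real^'r) set \<Rightarrow> (complex option \<Rightarrow> (real^'r) set) \<Rightarrow> complex option set \<Rightarrow> (real^'r) set" where
  "msum_pd \<sigma> D T = {v + (\<Sum>y\<in>supp_pd \<sigma> D \<inter> T. f y) | v f.
      v \<in> \<sigma> \<and> (\<forall>y\<in>supp_pd \<sigma> D \<inter> T. f y \<in> D y)}"

definition deg_pd :: "(real^'r) set \<Rightarrow> (complex option \<Rightarrow> (real^'r) set) \<Rightarrow> (real^'r) set" where
  "deg_pd \<sigma> D = msum_pd \<sigma> D UNIV"

definition proper_pd :: "(real^'r) set \<Rightarrow> (complex option \<Rightarrow> (real^'r) set) \<Rightarrow> bool" where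
  "proper_pd \<sigma> D \<longleftrightarrow> deg_pd \<sigma> D \<subset> \<sigma>"

definition dual_cone :: "'a::real_inner set \<Rightarrow> 'a set" where
  "dual_cone \<sigma> = {u. \<forall>v\<in>\<sigma>. 0 \<le> inner u v}"

definition hfun :: "(real^'r) set \<Rightarrow> real^'r \<Rightarrow> real" where
  "hfun P u = Inf ((\<lambda>v. inner u v) ` P)"

text \<open>dim H^0(P^1, O(floor(D(u)))) = max(0, deg floor(D(u)) + 1) on P^1;
  points outside the support contribute floor(min_sigma <u,.>) = 0.\<close>
definition dimR :: "(real^'r) set \<Rightarrow> (complex option \<Rightarrow> (real^'r) set) \<Rightarrow> real^'r \<Rightarrow> nat" where
  "dimR \<sigma> D u = nat ((\<Sum>y\<in>supp_pd \<sigma> D. \<lfloor>hfun (D y) u\<rfloor>) + 1)"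

definition lattice_M :: "(real^'r) set" where
  "lattice_M = {u. int_vec u}"

definition index_char_X :: "(real^'r) set \<Rightarrow> (complex option \<Rightarrow> (real^'r) set) \<Rightarrow> real^'r \<Rightarrow> real \<Rightarrow> real" where
  "index_char_X \<sigma> D \<xi> t =
     infsum (\<lambda>u. real (dimR \<sigma> D u) * exp (- t * inner u \<xi>)) (dual_cone \<sigma> \<inter> lattice_M)"

definition sigma_y :: "(real^'r) set \<Rightarrow> (complex option \<Rightarrow> (real^'r) set) \<Rightarrow> complex option \<Rightarrow> ((real^'r) \<times> real) set" where
  "sigma_y \<sigma> D y = convex_cone hull
     ((\<lambda>v. (v, 0)) ` \<sigma> \<union> (\<lambda>v. (v, 1)) ` D y \<union> (\<lambda>v. (v, -1)) ` msum_pd \<sigma> D (- {y}))"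

definition lattice_MZ :: "((real^'r) \<times> real) set" where
  "lattice_MZ = {w. int_vec (fst w) \<and> snd w \<in> \<int>}"

text \<open>Index character of the affine toric variety with cone tau (all graded pieces 1-dim).\<close>
definition index_char_toric :: "((real^'r) \<times> real) set \<Rightarrow> (real^'r) \<times> real \<Rightarrow> real \<Rightarrow> real" where
  "index_char_toric \<tau> \<xi> t = infsum (\<lambda>w. exp (- t * inner w \<xi>)) (dual_cone \<tau> \<inter> lattice_MZ)"

end

theory Submission
  imports Defs "HOL-Probability.Distributions"
begin

text \<open>
  Both index characters are lattice-point series over the dual cone of \<sigma>. The dual of
  \<sigma>_y fibres over it: above u it is the interval -D_y(u) \<le> k \<le> (\<Sum>_{z \<noteq> y} D_z)(u), and
  the number of integers in that interval differs from dim H^0(P^1, O(\<lfloor>D(u)\<rfloor>)) by at most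
  the size of the support of D, the error coming only from rounding at those points. Hence
  the two series differ by at most a constant times the lattice-point series of the dual of
  \<sigma>, which is one order of t smaller and does not affect the leading term. That term is
  computed by a Riemann-sum argument: for a closed convex cone \<tau> on which \<langle>-,\<zeta>\<rangle> is bounded
  below by a multiple of the norm, t^d \<Sum>_{w \<in> \<tau> \<inter> \<int>^d} exp(-t\<langle>w,\<zeta>\<rangle>) tends to
  \<integral>_\<tau> exp(-\<langle>w,\<zeta>\<rangle>) dw = d! vol {w \<in> \<tau>. \<langle>w,\<zeta>\<rangle> \<le> 1}.
\<close>

section \<open>Laplace transforms of cones\<close>

lemma nn_integral_exp_neg_atLeast:
  "(\<integral>\<^sup>+r. ennreal (exp (-r)) * indicator {s..} r \<partial>lborel) = ennreal (exp (-s))"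
proof -
  have "(\<integral>\<^sup>+r. ennreal (exp (-r)) * indicator {s..} r \<partial>lborel) = ennreal (0 - (- exp (-s)))"
    by (rule nn_integral_FTC_atLeast[where F="\<lambda>x. - exp (-x)"])
       (auto intro!: derivative_eq_intros, real_asymp)
  then show ?thesis by simp
qed

lemma nn_integral_exp_neg_layer_cake:
  fixes \<phi> :: "'a::euclidean_space \<Rightarrow> real"
  assumes [measurable]: "A \<in> sets borel" and [measurable]: "\<phi> \<in> borel_measurable borel"
  shows "(\<integral>\<^sup>+y. ennreal (exp (- \<phi> y)) * indicator A y \<partial>lborel)
       = (\<integral>\<^sup>+r. ennreal (exp (-r)) * emeasure lborel {y\<in>A. \<phi> y \<le> r} \<partial>lborel)"
proof -
  let ?S = "{(y, r). y \<in> A \<and> \<phi> y \<le> r}"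
  have [measurable]: "?S \<in> sets (lborel \<Otimes>\<^sub>M lborel)"
  proof -
    have "Measurable.pred (lborel \<Otimes>\<^sub>M lborel) (\<lambda>p::'a \<times> real. fst p \<in> A \<and> \<phi> (fst p) \<le> snd p)"
      by measurable
    then show ?thesis by (simp add: pred_def space_pair_measure case_prod_unfold)
  qed
  have "(\<integral>\<^sup>+y. ennreal (exp (- \<phi> y)) * indicator A y \<partial>lborel)
      = (\<integral>\<^sup>+y. (\<integral>\<^sup>+r. ennreal (exp (-r)) * indicator ?S (y, r) \<partial>lborel) \<partial>lborel)"
  proof (rule nn_integral_cong)
    fix y :: 'a
    have "(\<integral>\<^sup>+r. ennreal (exp (-r)) * indicator ?S (y, r) \<partial>lborel)
        = indicator A y * (\<integral>\<^sup>+r. ennreal (exp (-r)) * indicator {\<phi> y..} r \<partial>lborel)"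
      by (cases "y \<in> A") (auto intro!: nn_integral_cong split: split_indicator)
    then show "ennreal (exp (- \<phi> y)) * indicator A y
        = (\<integral>\<^sup>+r. ennreal (exp (-r)) * indicator ?S (y, r) \<partial>lborel)"
      by (simp add: nn_integral_exp_neg_atLeast mult.commute)
  qed
  also have "\<dots> = (\<integral>\<^sup>+r. (\<integral>\<^sup>+y. ennreal (exp (-r)) * indicator ?S (y, r) \<partial>lborel) \<partial>lborel)"
    by (rule lborel_pair.Fubini'[symmetric]) measurable
  also have "\<dots> = (\<integral>\<^sup>+r. ennreal (exp (-r)) * emeasure lborel {y\<in>A. \<phi> y \<le> r} \<partial>lborel)"
  proof (rule nn_integral_cong)
    fix r :: real
    have "(\<integral>\<^sup>+y. ennreal (exp (-r)) * indicator ?S (y, r) \<partial>lborel)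
        = (\<integral>\<^sup>+y. ennreal (exp (-r)) * indicator {y\<in>A. \<phi> y \<le> r} y \<partial>lborel)"
      by (intro nn_integral_cong) (auto split: split_indicator)
    also have "\<dots> = ennreal (exp (-r)) * emeasure lborel {y\<in>A. \<phi> y \<le> r}"
      by (rule nn_integral_cmult_indicator) measurable
    finally show "(\<integral>\<^sup>+y. ennreal (exp (-r)) * indicator ?S (y, r) \<partial>lborel)
        = ennreal (exp (-r)) * emeasure lborel {y\<in>A. \<phi> y \<le> r}" .
  qed
  finally show ?thesis .
qed

lemma integrable_exp_neg_norm:
  fixes c :: real
  assumes c: "0 < c"
  shows "integrable lborel (\<lambda>y::'a::euclidean_space. exp (- (c * norm y)))"
proof (rule integrableI_bounded)
  have sublevel: "emeasure lborel {y\<in>UNIV. c * norm (y::'a) \<le> r}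
      = ennreal (unit_ball_vol DIM('a) / c ^ DIM('a)) * ennreal (r ^ DIM('a)) * indicator {0..} r" for r
  proof (cases "0 \<le> r")
    case True
    have "{y\<in>UNIV. c * norm (y::'a) \<le> r} = cball 0 (r / c)"
      using c by (auto simp: field_simps)
    then show ?thesis
      using True c by (simp add: emeasure_cball ennreal_mult'[symmetric] power_divide field_simps)
  next
    case False
    then have "{y\<in>UNIV. c * norm (y::'a) \<le> r} = {}"
      using c by (auto simp: not_le intro: less_le_trans[OF _ mult_nonneg_nonneg])
    then show ?thesis using False by simp
  qed
  have "(\<integral>\<^sup>+y. ennreal (norm (exp (- (c * norm (y::'a))))) \<partial>lborel)
      = (\<integral>\<^sup>+y. ennreal (exp (- (c * norm (y::'a)))) * indicator UNIV y \<partial>lborel)"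
    by simp
  also have "\<dots> = (\<integral>\<^sup>+r. ennreal (exp (-r)) * emeasure lborel {y\<in>UNIV. c * norm (y::'a) \<le> r} \<partial>lborel)"
    by (rule nn_integral_exp_neg_layer_cake) auto
  also have "\<dots> = ennreal (unit_ball_vol DIM('a) / c ^ DIM('a))
      * (\<integral>\<^sup>+r. ennreal (r ^ DIM('a) * exp (-r)) * indicator {0..} r \<partial>lborel)"
    unfolding sublevel
    by (subst nn_integral_cmult[symmetric])
       (auto intro!: nn_integral_cong simp: ennreal_mult'[symmetric] mult_ac split: split_indicator)
  also have "\<dots> < \<infinity>"
    by (simp add: nn_intergal_power_times_exp_Ici ennreal_mult_less_top)
  finally show "(\<integral>\<^sup>+y. ennreal (norm (exp (- (c * norm (y::'a))))) \<partial>lborel) < \<infinity>" .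
qed simp

lemma emeasure_cone_sublevel_scale:
  fixes \<tau> :: "'a::euclidean_space set"
  assumes "closed \<tau>" "cone \<tau>" "0 < r"
  shows "emeasure lborel {w\<in>\<tau>. inner w \<zeta> \<le> r}
       = ennreal (r ^ DIM('a)) * emeasure lborel {w\<in>\<tau>. inner w \<zeta> \<le> 1}"
proof -
  let ?P = "{w\<in>\<tau>. inner w \<zeta> \<le> 1}"
  have [measurable]: "\<tau> \<in> sets borel"
    using assms(1) by (simp add: borel_closed)
  have scale: "{w\<in>\<tau>. inner w \<zeta> \<le> r} = (\<lambda>x. r *\<^sub>R x + 0) ` ?P"
  proof (intro set_eqI iffI)
    fix w assume w: "w \<in> {w\<in>\<tau>. inner w \<zeta> \<le> r}"
    then have "(1/r) *\<^sub>R w \<in> ?P"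
      using assms by (auto simp: cone_def field_simps)
    moreover have "w = r *\<^sub>R ((1/r) *\<^sub>R w) + 0" using assms by simp
    ultimately show "w \<in> (\<lambda>x. r *\<^sub>R x + 0) ` ?P" by blast
  qed (use assms in \<open>auto simp: cone_def intro: mult_left_le\<close>)
  have "emeasure lborel {w\<in>\<tau>. inner w \<zeta> \<le> r} = emeasure lebesgue {w\<in>\<tau>. inner w \<zeta> \<le> r}"
    by simp
  also have "\<dots> = \<bar>r\<bar> ^ DIM('a) * emeasure lebesgue ?P"
    unfolding scale by (rule emeasure_lebesgue_affine)
  finally show ?thesis using assms by simp
qed

lemma nn_integral_exp_neg_cone:
  fixes \<tau> :: "'a::euclidean_space set"
  assumes "closed \<tau>" "cone \<tau>" "0 < c"
    and bound: "\<And>w. w \<in> \<tau> \<Longrightarrow> c * norm w \<le> inner w \<zeta>"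
  shows "(\<integral>\<^sup>+y. ennreal (exp (- inner y \<zeta>)) * indicator \<tau> y \<partial>lborel)
       = ennreal (fact DIM('a)) * emeasure lborel {w\<in>\<tau>. inner w \<zeta> \<le> 1}"
proof -
  let ?P = "{w\<in>\<tau>. inner w \<zeta> \<le> 1}"
  have [measurable]: "\<tau> \<in> sets borel"
    using assms(1) by (simp add: borel_closed)
  have sublevel: "ennreal (exp (-r)) * emeasure lborel {y\<in>\<tau>. inner y \<zeta> \<le> r}
      = ennreal (r ^ DIM('a) * exp (-r)) * indicator {0..} r * emeasure lborel ?P" for r
  proof (cases "0 < r")
    case True
    then show ?thesis
      using emeasure_cone_sublevel_scale[OF assms(1,2) True]
      by (simp add: ennreal_mult mult_ac)
  next
    case False
    have "{y\<in>\<tau>. inner y \<zeta> \<le> r} \<subseteq> {0}"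
    proof
      fix y assume "y \<in> {y\<in>\<tau>. inner y \<zeta> \<le> r}"
      then have "c * norm y \<le> 0" using bound[of y] False by auto
      then show "y \<in> {0}" using \<open>0 < c\<close> by (simp add: mult_le_0_iff)
    qed
    then have "emeasure lborel {y\<in>\<tau>. inner y \<zeta> \<le> r} = 0"
      using emeasure_mono[of _ "{0::'a}" lborel] by (simp add: le_zero_eq)
    moreover have "r ^ DIM('a) * exp (-r) = 0 \<or> r < 0"
      using False by (cases "r = 0") auto
    ultimately show ?thesis by (auto simp: indicator_def)
  qed
  have "(\<integral>\<^sup>+y. ennreal (exp (- inner y \<zeta>)) * indicator \<tau> y \<partial>lborel)
      = (\<integral>\<^sup>+r. ennreal (r ^ DIM('a) * exp (-r)) * indicator {0..} r * emeasure lborel ?P \<partial>lborel)"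
    unfolding nn_integral_exp_neg_layer_cake[of \<tau> "\<lambda>y. inner y \<zeta>", simplified] sublevel ..
  also have "\<dots> = (\<integral>\<^sup>+r. ennreal (r ^ DIM('a) * exp (-r)) * indicator {0..} r \<partial>lborel) * emeasure lborel ?P"
    by (rule nn_integral_multc) measurable
  also have "\<dots> = ennreal (fact DIM('a)) * emeasure lborel ?P"
    by (simp add: nn_intergal_power_times_exp_Ici)
  finally show ?thesis .
qed

section \<open>Lattice-point sums over cones\<close>

definition integer_lattice :: "'a::euclidean_space set" where
  "integer_lattice = {x. \<forall>b\<in>Basis. inner x b \<in> \<int>}"

definition lattice_floor :: "real \<Rightarrow> 'a::euclidean_space \<Rightarrow> 'a" where
  "lattice_floor t y = (\<Sum>b\<in>Basis. of_int \<lfloor>inner y b / t\<rfloor> *\<^sub>R b)"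

lemma inner_lattice_floor: "b \<in> Basis \<Longrightarrow> inner (lattice_floor t y) b = of_int \<lfloor>inner y b / t\<rfloor>"
  by (simp add: lattice_floor_def inner_sum_left inner_Basis if_distrib sum.If_cases)

lemma lattice_floor_in_integer_lattice: "lattice_floor t y \<in> integer_lattice"
  by (simp add: integer_lattice_def inner_lattice_floor)

lemma borel_measurable_lattice_floor[measurable]: "lattice_floor t \<in> borel_measurable borel"
  unfolding lattice_floor_def by measurable

lemma sets_lattice_floor_vimage:
  assumes "finite F"
  shows "{y::'a::euclidean_space. lattice_floor t y \<in> F} \<in> sets lborel"
proof -
  have [measurable]: "F \<in> sets borel"
    using assms by (simp add: borel_closed finite_imp_closed)
  have "Measurable.pred borel (\<lambda>y::'a. lattice_floor t y \<in> F)" by measurable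
  then show ?thesis by (simp add: pred_def)
qed

lemma norm_diff_lattice_floor_le:
  fixes y :: "'a::euclidean_space" and t :: real
  assumes "0 < t"
  shows "norm (y - t *\<^sub>R lattice_floor t y) \<le> DIM('a) * t"
proof -
  have "norm (y - t *\<^sub>R lattice_floor t y) \<le> (\<Sum>b\<in>Basis. \<bar>inner (y - t *\<^sub>R lattice_floor t y) b\<bar>)"
    by (rule norm_le_l1)
  also have "\<dots> \<le> of_nat (card (Basis::'a set)) * t"
  proof (rule sum_bounded_above)
    fix b :: 'a assume b: "b \<in> Basis"
    define x where "x = inner y b / t"
    have "inner (y - t *\<^sub>R lattice_floor t y) b = t * (x - of_int \<lfloor>x\<rfloor>)"
      using assms b by (simp add: x_def inner_diff_left inner_lattice_floor right_diff_distrib)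
    moreover have "0 \<le> x - of_int \<lfloor>x\<rfloor>" "x - of_int \<lfloor>x\<rfloor> \<le> 1"
      using of_int_floor_le[of x] real_of_int_floor_add_one_gt[of x] by linarith+
    ultimately show "\<bar>inner (y - t *\<^sub>R lattice_floor t y) b\<bar> \<le> t"
      using assms mult_left_le[of "x - of_int \<lfloor>x\<rfloor>" t] by simp
  qed
  finally show ?thesis by simp
qed

lemma lattice_floor_eq_iff:
  assumes t: "0 < t" and w: "w \<in> integer_lattice"
  shows "lattice_floor t y = w \<longleftrightarrow>
           (\<forall>b\<in>Basis. t * inner w b \<le> inner y b \<and> inner y b < t * inner w b + t)"
proof -
  have "lattice_floor t y = w \<longleftrightarrow> (\<forall>b\<in>Basis. of_int \<lfloor>inner y b / t\<rfloor> = inner w b)"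
    by (simp add: euclidean_eq_iff[of "lattice_floor t y"] inner_lattice_floor)
  also have "\<dots> \<longleftrightarrow> (\<forall>b\<in>Basis. t * inner w b \<le> inner y b \<and> inner y b < t * inner w b + t)"
  proof (intro ball_cong refl)
    fix b :: 'a assume "b \<in> Basis"
    then obtain k where k: "inner w b = of_int k"
      using w by (auto simp: integer_lattice_def elim!: Ints_cases)
    have "of_int \<lfloor>inner y b / t\<rfloor> = inner w b \<longleftrightarrow> of_int k \<le> inner y b / t \<and> inner y b / t < of_int k + 1"
      unfolding k by (simp add: floor_eq_iff)
    also have "\<dots> \<longleftrightarrow> t * inner w b \<le> inner y b \<and> inner y b < t * inner w b + t"
      using t k by (simp add: field_simps)
    finally show "of_int \<lfloor>inner y b / t\<rfloor> = inner w b
        \<longleftrightarrow> t * inner w b \<le> inner y b \<and> inner y b < t * inner w b + t" .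
  qed
  finally show ?thesis .
qed

lemma emeasure_lattice_floor_cell:
  fixes w :: "'a::euclidean_space"
  assumes t: "0 < t" and w: "w \<in> integer_lattice"
  shows "emeasure lborel {y. lattice_floor t y = w} = ennreal (t ^ DIM('a))"
proof -
  define v :: 'a where "v = (\<Sum>b\<in>Basis. t *\<^sub>R b)"
  have vb: "b \<in> Basis \<Longrightarrow> inner v b = t" for b
    by (simp add: v_def inner_sum_left inner_Basis if_distrib sum.If_cases)
  let ?lo = "t *\<^sub>R w" and ?hi = "t *\<^sub>R w + v"
  have box: "box ?lo ?hi \<subseteq> {y. lattice_floor t y = w}"
  proof
    fix x assume x: "x \<in> box ?lo ?hi"
    have "t * inner w b \<le> inner x b \<and> inner x b < t * inner w b + t" if "b \<in> Basis" for b
      using x vb[OF that] that by (auto simp: mem_box inner_add_left)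
    then show "x \<in> {y. lattice_floor t y = w}"
      by (simp add: lattice_floor_eq_iff[OF t w])
  qed
  have cbox: "{y. lattice_floor t y = w} \<subseteq> cbox ?lo ?hi"
    using t w vb by (auto simp: lattice_floor_eq_iff mem_box inner_add_left less_imp_le)
  have le: "\<forall>b\<in>Basis. ?lo \<bullet> b \<le> ?hi \<bullet> b"
    using t vb by (simp add: inner_add_left)
  have "(\<Prod>b\<in>Basis. (?hi - ?lo) \<bullet> b) = (\<Prod>b\<in>(Basis::'a set). t)"
    by (rule prod.cong) (auto simp: vb)
  then have "(\<Prod>b\<in>Basis. (?hi - ?lo) \<bullet> b) = t ^ DIM('a)"
    by simp
  then have "emeasure lborel (box ?lo ?hi) = ennreal (t ^ DIM('a))"
            "emeasure lborel (cbox ?lo ?hi) = ennreal (t ^ DIM('a))"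
    by (simp_all only: emeasure_lborel_box_eq emeasure_lborel_cbox_eq if_P[OF le])
  moreover have "emeasure lborel (box ?lo ?hi) \<le> emeasure lborel {y. lattice_floor t y = w}"
    using box sets_lattice_floor_vimage[of "{w}" t] by (intro emeasure_mono) auto
  moreover have "emeasure lborel {y. lattice_floor t y = w} \<le> emeasure lborel (cbox ?lo ?hi)"
    using cbox by (intro emeasure_mono) auto
  ultimately show ?thesis
    by (intro antisym) simp_all
qed

lemma finite_integer_lattice_box:
  "finite {w::'a::euclidean_space. w \<in> integer_lattice \<and> (\<forall>b\<in>Basis. \<bar>inner w b\<bar> \<le> real N)}"
proof -
  let ?h = "\<lambda>f. (\<Sum>b\<in>Basis. of_int (f b) *\<^sub>R b) :: 'a"
  have "{w::'a. w \<in> integer_lattice \<and> (\<forall>b\<in>Basis. \<bar>inner w b\<bar> \<le> real N)}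
      \<subseteq> ?h ` (Basis \<rightarrow>\<^sub>E {- int N..int N})"
  proof
    fix w :: 'a assume w: "w \<in> {w. w \<in> integer_lattice \<and> (\<forall>b\<in>Basis. \<bar>inner w b\<bar> \<le> real N)}"
    have ib: "b \<in> Basis \<Longrightarrow> of_int \<lfloor>inner w b\<rfloor> = inner w b" for b
      using w by (auto simp: integer_lattice_def)
    have "w = ?h (restrict (\<lambda>b. \<lfloor>inner w b\<rfloor>) Basis)"
      by (subst euclidean_representation[symmetric, of w]) (auto intro!: sum.cong simp: ib)
    moreover have "\<lfloor>inner w b\<rfloor> \<in> {- int N..int N}" if "b \<in> Basis" for b
    proof -
      have "\<bar>of_int \<lfloor>inner w b\<rfloor>\<bar> \<le> real N"
        by (simp only: ib[OF that]) (use w that in auto)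
      then show ?thesis by auto
    qed
    then have "restrict (\<lambda>b. \<lfloor>inner w b\<rfloor>) Basis \<in> Basis \<rightarrow>\<^sub>E {- int N..int N}"
      by simp
    ultimately show "w \<in> ?h ` (Basis \<rightarrow>\<^sub>E {- int N..int N})"
      by (rule rev_image_eqI[rotated])
  qed
  moreover have "finite (?h ` (Basis \<rightarrow>\<^sub>E {- int N..int N}))"
    by (intro finite_imageI finite_PiE) auto
  ultimately show ?thesis by (rule finite_subset)
qed

locale lattice_cone =
  fixes \<tau> :: "'a::euclidean_space set" and \<zeta> :: 'a and c :: real
  assumes closed: "closed \<tau>" and convex: "convex \<tau>" and cone: "cone \<tau>" and c_pos: "0 < c"
    and norm_le_inner: "\<And>w. w \<in> \<tau> \<Longrightarrow> c * norm w \<le> inner w \<zeta>"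
begin

lemma tau_sets_borel[measurable]: "\<tau> \<in> sets borel"
  using closed by (simp add: borel_closed)

definition lattice_step :: "real \<Rightarrow> 'a \<Rightarrow> real" where
  "lattice_step t y = indicator \<tau> (lattice_floor t y) * exp (- t * inner (lattice_floor t y) \<zeta>)"

lemma borel_measurable_lattice_step[measurable]: "lattice_step t \<in> borel_measurable borel"
  unfolding lattice_step_def by measurable

lemma lattice_step_nonneg: "0 \<le> lattice_step t y"
  by (simp add: lattice_step_def)

lemma lattice_step_le:
  assumes t: "0 < t"
  shows "lattice_step t y \<le> exp (c * DIM('a) * t) * exp (- (c * norm y))"
proof (cases "lattice_floor t y \<in> \<tau>")
  case True
  let ?z = "t *\<^sub>R lattice_floor t y"
  have "?z \<in> \<tau>" using True cone t by (simp add: cone_def)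
  have "norm y \<le> norm ?z + DIM('a) * t"
    using norm_diff_lattice_floor_le[OF t, of y] norm_triangle_sub[of y ?z] by linarith
  then have "c * norm y \<le> c * norm ?z + c * DIM('a) * t"
    using mult_left_mono[of _ _ c] c_pos by (fastforce simp only: distrib_left mult.assoc)
  moreover have "c * norm ?z \<le> t * inner (lattice_floor t y) \<zeta>"
    using norm_le_inner[OF \<open>?z \<in> \<tau>\<close>] by (simp only: inner_scaleR_left)
  ultimately have "- t * inner (lattice_floor t y) \<zeta> \<le> c * DIM('a) * t + - (c * norm y)"
    by linarith
  then show ?thesis
    using True by (simp add: lattice_step_def mult_exp_exp)
qed (simp add: lattice_step_def)

lemma integrable_lattice_step:
  assumes "0 < t"
  shows "integrable lborel (lattice_step t)"
proof (rule Bochner_Integration.integrable_bound)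
  show "integrable lborel (\<lambda>y::'a. exp (c * DIM('a) * t) * exp (- (c * norm y)))"
    by (intro integrable_mult_right integrable_exp_neg_norm c_pos)
  show "AE y in lborel. norm (lattice_step t y) \<le> norm (exp (c * DIM('a) * t) * exp (- (c * norm y)))"
  proof (rule AE_I2)
    fix y :: 'a
    have "norm (lattice_step t y) = lattice_step t y"
      using lattice_step_nonneg[of t y] by simp
    also have "\<dots> \<le> exp (c * DIM('a) * t) * exp (- (c * norm y))"
      by (rule lattice_step_le[OF assms])
    finally show "norm (lattice_step t y) \<le> norm (exp (c * DIM('a) * t) * exp (- (c * norm y)))"
      by simp
  qed
qed simp

lemma integral_lattice_step_restrict:
  assumes t: "0 < t" and F: "finite F" "F \<subseteq> \<tau> \<inter> integer_lattice"
  shows "integral\<^sup>L lborel (\<lambda>y. lattice_step t y * indicator {y. lattice_floor t y \<in> F} y)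
       = t ^ DIM('a) * (\<Sum>w\<in>F. exp (- t * inner w \<zeta>))"
proof -
  let ?cell = "\<lambda>w. {y::'a. lattice_floor t y = w}"
  have eq: "lattice_step t y * indicator {y. lattice_floor t y \<in> F} y
      = (\<Sum>w\<in>F. exp (- t * inner w \<zeta>) * indicator (?cell w) y)" for y
    using F by (cases "lattice_floor t y \<in> F")
      (auto simp: lattice_step_def indicator_def if_distrib sum.delta' cong: if_cong)
  have cell: "w \<in> F \<Longrightarrow> integrable lborel (indicator (?cell w) :: 'a \<Rightarrow> real)
      \<and> integral\<^sup>L lborel (indicator (?cell w) :: 'a \<Rightarrow> real) = t ^ DIM('a)" for w
    using F emeasure_lattice_floor_cell[OF t, of w] sets_lattice_floor_vimage[of "{w}" t] t
    by (auto simp: integrable_indicator_iff measure_def)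
  have "integral\<^sup>L lborel (\<lambda>y. lattice_step t y * indicator {y. lattice_floor t y \<in> F} y)
      = (\<Sum>w\<in>F. integral\<^sup>L lborel (\<lambda>y. exp (- t * inner w \<zeta>) * indicator (?cell w) y))"
    unfolding eq using cell by (intro Bochner_Integration.integral_sum) auto
  also have "\<dots> = (\<Sum>w\<in>F. exp (- t * inner w \<zeta>) * t ^ DIM('a))"
    using cell by (intro sum.cong) auto
  finally show ?thesis
    by (simp add: sum_distrib_left mult.commute)
qed

lemma lattice_sum_le_integral:
  assumes t: "0 < t" and F: "finite F" "F \<subseteq> \<tau> \<inter> integer_lattice"
  shows "t ^ DIM('a) * (\<Sum>w\<in>F. exp (- t * inner w \<zeta>)) \<le> integral\<^sup>L lborel (lattice_step t)"
proof -
  have "t ^ DIM('a) * (\<Sum>w\<in>F. exp (- t * inner w \<zeta>))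
      = integral\<^sup>L lborel (\<lambda>y. lattice_step t y * indicator {y. lattice_floor t y \<in> F} y)"
    by (rule integral_lattice_step_restrict[OF t F, symmetric])
  also have "\<dots> \<le> integral\<^sup>L lborel (lattice_step t)"
    using integrable_lattice_step[OF t] sets_lattice_floor_vimage[OF F(1)]
    by (intro integral_mono integrable_real_mult_indicator)
       (auto simp: indicator_def lattice_step_nonneg)
  finally show ?thesis .
qed

lemma summable_on_exp_lattice:
  assumes t: "0 < t"
  shows "(\<lambda>w. exp (- t * inner w \<zeta>)) summable_on (\<tau> \<inter> integer_lattice)"
proof (rule nonneg_bdd_above_summable_on)
  show "bdd_above (sum (\<lambda>w. exp (- t * inner w \<zeta>)) ` {F. F \<subseteq> \<tau> \<inter> integer_lattice \<and> finite F})"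
  proof (rule bdd_aboveI2)
    fix F assume "F \<in> {F. F \<subseteq> \<tau> \<inter> integer_lattice \<and> finite F}"
    then have "t ^ DIM('a) * sum (\<lambda>w. exp (- t * inner w \<zeta>)) F \<le> integral\<^sup>L lborel (lattice_step t)"
      by (intro lattice_sum_le_integral[OF t]) auto
    then show "sum (\<lambda>w. exp (- t * inner w \<zeta>)) F \<le> integral\<^sup>L lborel (lattice_step t) / t ^ DIM('a)"
      using t by (simp add: field_simps)
  qed
qed simp

lemma infsum_exp_lattice_le_integral:
  assumes t: "0 < t"
  shows "t ^ DIM('a) * infsum (\<lambda>w. exp (- t * inner w \<zeta>)) (\<tau> \<inter> integer_lattice)
       \<le> integral\<^sup>L lborel (lattice_step t)"
proof -
  let ?E = "\<lambda>w. exp (- t * inner w \<zeta>)"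
  have "infsum ?E (\<tau> \<inter> integer_lattice) = (SUP F\<in>{F. finite F \<and> F \<subseteq> \<tau> \<inter> integer_lattice}. sum ?E F)"
    by (rule infsum_nonneg_is_SUPREMUM_real[OF summable_on_exp_lattice[OF t]]) simp
  also have "\<dots> \<le> integral\<^sup>L lborel (lattice_step t) / t ^ DIM('a)"
    using lattice_sum_le_integral[OF t] t by (intro cSUP_least) (auto simp: field_simps)
  finally show ?thesis
    using t by (simp add: field_simps)
qed

text \<open>Dominated convergence, exhausting the lattice points of \<open>\<tau>\<close> by those in growing boxes.\<close>
lemma integral_lattice_step_boxes_tendsto:
  assumes t: "0 < t"
  defines "F N \<equiv> {w \<in> \<tau> \<inter> integer_lattice. \<forall>b\<in>Basis. \<bar>inner w b\<bar> \<le> real N}"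
  shows "(\<lambda>N. integral\<^sup>L lborel (\<lambda>y. lattice_step t y * indicator {y. lattice_floor t y \<in> F N} y))
      \<longlonglongrightarrow> integral\<^sup>L lborel (lattice_step t)"
proof (rule integral_dominated_convergence[where w="lattice_step t"])
  have finF: "finite (F N)" for N
    by (rule finite_subset[OF _ finite_integer_lattice_box[of N]]) (auto simp: F_def)
  then show "(\<lambda>y. lattice_step t y * indicator {y. lattice_floor t y \<in> F N} y) \<in> borel_measurable lborel" for N
    using sets_lattice_floor_vimage[OF finF, of t N] by simp
  have eventually_in_F: "\<forall>\<^sub>F N in sequentially. w \<in> F N" if "w \<in> \<tau> \<inter> integer_lattice" for w
  proof (rule eventually_sequentiallyI)
    fix N :: nat assume "nat \<lceil>\<Sum>b\<in>Basis. \<bar>inner w b\<bar>\<rceil> \<le> N"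
    then have "(\<Sum>b\<in>Basis. \<bar>inner w b\<bar>) \<le> real N" by linarith
    moreover have "\<bar>inner w b\<bar> \<le> (\<Sum>b\<in>Basis. \<bar>inner w b\<bar>)" if "b \<in> Basis" for b
      using that by (intro member_le_sum) auto
    ultimately show "w \<in> F N"
      using \<open>w \<in> \<tau> \<inter> integer_lattice\<close> unfolding F_def by fastforce
  qed
  show "AE y in lborel. (\<lambda>N. lattice_step t y * indicator {y. lattice_floor t y \<in> F N} y)
      \<longlonglongrightarrow> lattice_step t y"
  proof (rule AE_I2)
    fix y :: 'a
    show "(\<lambda>N. lattice_step t y * indicator {y. lattice_floor t y \<in> F N} y) \<longlonglongrightarrow> lattice_step t y"
    proof (cases "lattice_floor t y \<in> \<tau>")
      case True
      then have "\<forall>\<^sub>F N in sequentially. lattice_floor t y \<in> F N"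
        by (intro eventually_in_F) (simp add: lattice_floor_in_integer_lattice)
      then show ?thesis
        by (rule tendsto_eventually[OF eventually_mono]) (simp add: indicator_def)
    qed (simp add: lattice_step_def)
  qed
  show "AE y in lborel. norm (lattice_step t y * indicator {y. lattice_floor t y \<in> F N} y)
      \<le> lattice_step t y" for N
    by (intro AE_I2) (simp add: indicator_def lattice_step_nonneg)
qed (simp_all add: integrable_lattice_step[OF t])

lemma lattice_sum_eq_integral:
  assumes t: "0 < t"
  shows "t ^ DIM('a) * infsum (\<lambda>w. exp (- t * inner w \<zeta>)) (\<tau> \<inter> integer_lattice)
       = integral\<^sup>L lborel (lattice_step t)"
proof (rule antisym[OF infsum_exp_lattice_le_integral[OF t]])
  let ?E = "\<lambda>w. exp (- t * inner w \<zeta>)"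
  define F where "F N = {w \<in> \<tau> \<inter> integer_lattice. \<forall>b\<in>Basis. \<bar>inner w b\<bar> \<le> real N}" for N :: nat
  have "integral\<^sup>L lborel (\<lambda>y. lattice_step t y * indicator {y. lattice_floor t y \<in> F N} y)
      \<le> t ^ DIM('a) * infsum ?E (\<tau> \<inter> integer_lattice)" for N
  proof -
    have finF: "finite (F N)" "F N \<subseteq> \<tau> \<inter> integer_lattice"
      by (rule finite_subset[OF _ finite_integer_lattice_box[of N]]) (auto simp: F_def)
    have "infsum ?E (F N) \<le> infsum ?E (\<tau> \<inter> integer_lattice)"
      using finF summable_on_exp_lattice[OF t] by (intro infsum_mono_neutral) auto
    then show ?thesis
      using t by (simp add: integral_lattice_step_restrict[OF t finF] infsum_finite[OF finF(1)])
  qed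
  with integral_lattice_step_boxes_tendsto[OF t]
  show "integral\<^sup>L lborel (lattice_step t) \<le> t ^ DIM('a) * infsum ?E (\<tau> \<inter> integer_lattice)"
    unfolding F_def by (intro LIMSEQ_le_const2) auto
qed

lemma lattice_step_tendsto:
  assumes S: "\<And>n. 0 < S n" "S \<longlonglongrightarrow> 0" and y: "y \<notin> frontier \<tau>"
  shows "(\<lambda>n. lattice_step (S n) y) \<longlonglongrightarrow> indicator \<tau> y * exp (- inner y \<zeta>)"
proof -
  let ?z = "\<lambda>n. S n *\<^sub>R lattice_floor (S n) y"
  have "(\<lambda>n. y - ?z n) \<longlonglongrightarrow> 0"
  proof (rule Lim_null_comparison)
    show "\<forall>\<^sub>F n in sequentially. norm (y - ?z n) \<le> DIM('a) * S n"
      by (intro always_eventually allI norm_diff_lattice_floor_le S(1))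
    show "(\<lambda>n. real DIM('a) * S n) \<longlonglongrightarrow> 0"
      using tendsto_mult_right_zero[OF S(2)] by simp
  qed
  then have z: "?z \<longlonglongrightarrow> y"
    using tendsto_diff[OF tendsto_const[of y]] by fastforce
  have floor_in_iff: "lattice_floor (S n) y \<in> \<tau> \<longleftrightarrow> ?z n \<in> \<tau>" for n
    using cone S(1)[of n] mem_cone[OF cone, of "?z n" "1 / S n"] by (auto simp: cone_def)
  have "y \<in> interior \<tau> \<or> y \<in> - \<tau>"
    using y closed by (auto simp: frontier_def closure_closed)
  then show ?thesis
  proof
    assume "y \<in> interior \<tau>"
    then have "\<forall>\<^sub>F n in sequentially. ?z n \<in> interior \<tau>"
      by (rule topological_tendstoD[OF z open_interior])
    then have "\<forall>\<^sub>F n in sequentially. exp (- inner (?z n) \<zeta>) = lattice_step (S n) y"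
      by (rule eventually_mono) (auto simp: lattice_step_def floor_in_iff dest: interior_subset[THEN subsetD])
    moreover have "(\<lambda>n. exp (- inner (?z n) \<zeta>)) \<longlonglongrightarrow> exp (- inner y \<zeta>)"
      by (intro tendsto_intros z)
    ultimately have "(\<lambda>n. lattice_step (S n) y) \<longlonglongrightarrow> exp (- inner y \<zeta>)"
      by (rule Lim_transform_eventually[rotated])
    then show ?thesis
      using \<open>y \<in> interior \<tau>\<close> interior_subset by (auto simp: indicator_def)
  next
    assume "y \<in> - \<tau>"
    moreover have "open (- \<tau>)"
      using closed by (simp add: open_Compl)
    ultimately have "\<forall>\<^sub>F n in sequentially. ?z n \<in> - \<tau>"
      using topological_tendstoD[OF z] by blast
    then have "\<forall>\<^sub>F n in sequentially. 0 = lattice_step (S n) y"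
      by (rule eventually_mono) (use floor_in_iff in \<open>auto simp: lattice_step_def\<close>)
    then show ?thesis
      using \<open>y \<in> - \<tau>\<close> by (auto intro: Lim_transform_eventually[OF tendsto_const])
  qed
qed

lemma integral_indicator_exp_neg:
  "integral\<^sup>L lborel (\<lambda>y. indicator \<tau> y * exp (- inner y \<zeta>))
     = fact DIM('a) * measure lborel {w\<in>\<tau>. inner w \<zeta> \<le> 1}"
proof -
  have "(\<integral>\<^sup>+y. ennreal (indicator \<tau> y * exp (- inner y \<zeta>)) \<partial>lborel)
      = (\<integral>\<^sup>+y. ennreal (exp (- inner y \<zeta>)) * indicator \<tau> y \<partial>lborel)"
    by (rule nn_integral_cong) (auto simp: indicator_def)
  also have "\<dots> = ennreal (fact DIM('a)) * emeasure lborel {w\<in>\<tau>. inner w \<zeta> \<le> 1}"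
    by (rule nn_integral_exp_neg_cone[OF closed cone c_pos norm_le_inner])
  finally show ?thesis
    by (subst integral_eq_nn_integral) (auto simp: enn2real_mult measure_def)
qed

text \<open>The frontier of the convex set \<open>\<tau>\<close> is null, so the step functions converge almost
  everywhere.\<close>
lemma integral_lattice_step_tendsto:
  "((\<lambda>t. integral\<^sup>L lborel (lattice_step t))
      \<longlongrightarrow> integral\<^sup>L lborel (\<lambda>y. indicator \<tau> y * exp (- inner y \<zeta>))) (at_right 0)"
proof (rule tendsto_at_right_sequentially[where b=1])
  let ?w = "\<lambda>y::'a. exp (c * DIM('a)) * exp (- (c * norm y))"
  fix S :: "nat \<Rightarrow> real" assume S: "\<And>n. 0 < S n" "\<And>n. S n < 1" "decseq S" "S \<longlonglongrightarrow> 0"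
  show "(\<lambda>n. integral\<^sup>L lborel (lattice_step (S n)))
      \<longlonglongrightarrow> integral\<^sup>L lborel (\<lambda>y. indicator \<tau> y * exp (- inner y \<zeta>))"
  proof (rule integral_dominated_convergence[where w="?w"])
    show "integrable lborel ?w"
      by (intro integrable_mult_right integrable_exp_neg_norm c_pos)
    have "frontier \<tau> \<in> null_sets lebesgue"
      using negligible_convex_frontier[OF convex] by (simp add: negligible_iff_null_sets)
    then have "frontier \<tau> \<in> null_sets lborel"
      by (simp add: null_sets_completion_iff borel_closed)
    then show "AE y in lborel. (\<lambda>n. lattice_step (S n) y) \<longlonglongrightarrow> indicator \<tau> y * exp (- inner y \<zeta>)"
      by (rule AE_I') (use lattice_step_tendsto[OF S(1) S(4)] in auto)
    show "AE y in lborel. norm (lattice_step (S n) y) \<le> ?w y" for n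
    proof (rule AE_I2)
      fix y :: 'a
      have "lattice_step (S n) y \<le> exp (c * DIM('a) * S n) * exp (- (c * norm y))"
        by (rule lattice_step_le[OF S(1)])
      also have "\<dots> \<le> ?w y"
        using S(2)[of n] c_pos by (intro mult_right_mono) (auto intro!: mult_left_le)
      finally show "norm (lattice_step (S n) y) \<le> ?w y"
        using lattice_step_nonneg by simp
    qed
  qed simp_all
qed simp

lemma lattice_sum_asymptotics:
  "((\<lambda>t. t ^ DIM('a) * infsum (\<lambda>w. exp (- t * inner w \<zeta>)) (\<tau> \<inter> integer_lattice))
      \<longlongrightarrow> fact DIM('a) * measure lborel {w\<in>\<tau>. inner w \<zeta> \<le> 1}) (at_right 0)"
proof -
  have "\<forall>\<^sub>F t in at_right 0. integral\<^sup>L lborel (lattice_step t)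
      = t ^ DIM('a) * infsum (\<lambda>w. exp (- t * inner w \<zeta>)) (\<tau> \<inter> integer_lattice)"
    by (rule eventually_mono[OF eventually_at_right_less]) (metis lattice_sum_eq_integral)
  with integral_lattice_step_tendsto show ?thesis
    unfolding integral_indicator_exp_neg by (rule Lim_transform_eventually)
qed

end

section \<open>Dual cones\<close>

lemma dual_cone_eq_INT: "dual_cone A = (\<Inter>v\<in>A. {u. 0 \<le> inner u v})"
  by (auto simp: dual_cone_def)

lemma closed_dual_cone: "closed (dual_cone A)"
  unfolding dual_cone_eq_INT by (intro closed_INT ballI closed_Collect_le continuous_intros)

lemma convex_dual_cone: "convex (dual_cone A)"
  unfolding dual_cone_eq_INT
  by (intro convex_INT ballI) (simp add: convex_halfspace_ge inner_commute)

lemma cone_dual_cone: "cone (dual_cone A)"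
  by (auto simp: cone_def dual_cone_def)

lemma dual_cone_convex_cone_hull: "dual_cone (convex_cone hull A) = dual_cone A"
proof
  show "dual_cone (convex_cone hull A) \<subseteq> dual_cone A"
    using hull_subset[of A convex_cone] by (auto simp: dual_cone_def)
  show "dual_cone A \<subseteq> dual_cone (convex_cone hull A)"
  proof
    fix u assume u: "u \<in> dual_cone A"
    have "convex_cone {v. 0 \<le> inner u v}"
      by (auto simp: convex_cone_iff inner_add_right)
    moreover have "A \<subseteq> {v. 0 \<le> inner u v}"
      using u by (auto simp: dual_cone_def)
    ultimately have "convex_cone hull A \<subseteq> {v. 0 \<le> inner u v}"
      by (rule hull_minimal[rotated])
    then show "u \<in> dual_cone (convex_cone hull A)" by (auto simp: dual_cone_def)
  qed
qed

text \<open>Testing \<open>u\<close> against the point of a ball around \<open>\<xi>\<close> in direction \<open>-u\<close>.\<close>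
lemma interior_imp_dual_cone_norm_le_inner:
  fixes \<sigma> :: "'a::real_inner set"
  assumes "\<xi> \<in> interior \<sigma>"
  obtains c where "0 < c" "\<And>u. u \<in> dual_cone \<sigma> \<Longrightarrow> c * norm u \<le> inner u \<xi>"
proof -
  obtain e where e: "0 < e" "ball \<xi> e \<subseteq> \<sigma>"
    using assms by (auto simp: mem_interior)
  have "(e/2) * norm u \<le> inner u \<xi>" if u: "u \<in> dual_cone \<sigma>" for u
  proof (cases "u = 0")
    case False
    let ?v = "\<xi> - ((e/2) / norm u) *\<^sub>R u"
    have "?v \<in> \<sigma>" using False e by (auto simp: dist_norm)
    then have "0 \<le> inner u ?v" using u by (auto simp: dual_cone_def)
    also have "inner u ?v = inner u \<xi> - (e/2) * norm u"
      using False by (simp add: inner_diff_right power2_norm_eq_inner[symmetric] power2_eq_square)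
    finally show ?thesis by simp
  qed simp
  then show ?thesis using that[of "e/2"] e by auto
qed

lemma interior_imp_lattice_cone_dual_cone:
  fixes \<sigma> :: "'a::euclidean_space set"
  assumes "\<xi> \<in> interior \<sigma>"
  obtains c where "lattice_cone (dual_cone \<sigma>) \<xi> c"
  using interior_imp_dual_cone_norm_le_inner[OF assms]
  by (metis closed_dual_cone convex_dual_cone cone_dual_cone lattice_cone.intro)

section \<open>The cone \<open>\<sigma>\<^sub>y\<close> of a polyhedral divisor\<close>

lemma hfun_eq_minimum:
  assumes "v0 \<in> P" "\<And>v. v \<in> P \<Longrightarrow> inner u v0 \<le> inner u v"
  shows "hfun P u = inner u v0"
  unfolding hfun_def by (rule cInf_eq_minimum) (use assms in auto)

lemma le_inner_iff_le_hfun: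
  assumes "v0 \<in> P" "\<And>v. v \<in> P \<Longrightarrow> inner u v0 \<le> inner u v"
  shows "(\<forall>v\<in>P. a \<le> inner u v) \<longleftrightarrow> a \<le> hfun P u"
proof
  assume "\<forall>v\<in>P. a \<le> inner u v"
  then show "a \<le> hfun P u" using assms(1) hfun_eq_minimum[OF assms] by simp
next
  assume "a \<le> hfun P u"
  then show "\<forall>v\<in>P. a \<le> inner u v" using assms(2) hfun_eq_minimum[OF assms] by force
qed

lemma pointed_rat_cone_zero:
  assumes "pointed_rat_cone \<sigma>"
  shows "0 \<in> \<sigma>"
proof -
  have "\<sigma> \<inter> uminus ` \<sigma> = {0}"
    using assms by (simp add: pointed_rat_cone_def)
  then show ?thesis by (metis IntD1 singletonI)
qed

lemma hfun_tail_cone_eq_0: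
  assumes "0 \<in> \<sigma>" "u \<in> dual_cone \<sigma>"
  shows "hfun \<sigma> u = 0"
  using hfun_eq_minimum[of 0 \<sigma> u] assms by (simp add: dual_cone_def)

lemma polyhedron_with_tail_minimizer:
  assumes P: "polyhedron_with_tail P \<sigma>" and "0 \<in> \<sigma>" and u: "u \<in> dual_cone \<sigma>"
  obtains v0 where "v0 \<in> P" "\<And>v. v \<in> P \<Longrightarrow> inner u v0 \<le> inner u v"
proof -
  obtain V where V: "finite V" "V \<noteq> {}" "P = {p + q | p q. p \<in> convex hull V \<and> q \<in> \<sigma>}"
    using P by (auto simp: polyhedron_with_tail_def)
  have "Min ((\<lambda>v. inner u v) ` V) \<in> (\<lambda>v. inner u v) ` V"
    using V(1,2) by (intro Min_in) auto
  then obtain v0 where v0: "v0 \<in> V" "inner u v0 = Min ((\<lambda>v. inner u v) ` V)"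
    by (metis (no_types, lifting) imageE)
  have "convex hull V \<subseteq> {x. inner u v0 \<le> inner u x}"
    by (rule hull_minimal) (use V(1) v0 in \<open>auto simp: convex_halfspace_ge\<close>)
  moreover have "0 \<le> inner u q" if "q \<in> \<sigma>" for q
    using u that by (auto simp: dual_cone_def)
  ultimately have "inner u v0 \<le> inner u v" if "v \<in> P" for v
    using that V(3) by (force simp: inner_add_right intro: add_increasing2)
  moreover have "v0 \<in> P"
    unfolding V(3) using v0(1) \<open>0 \<in> \<sigma>\<close> hull_inc[of v0 V] by force
  ultimately show ?thesis using that by blast
qed

text \<open>A sum of minimisers of the summands minimises the Minkowski sum.\<close>
lemma msum_pd_minimizer:
  assumes D: "polyhedral_divisor \<sigma> D" and u: "u \<in> dual_cone \<sigma>"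
  obtains v0 where "v0 \<in> msum_pd \<sigma> D T" "\<And>v. v \<in> msum_pd \<sigma> D T \<Longrightarrow> inner u v0 \<le> inner u v"
    and "inner u v0 = (\<Sum>z\<in>supp_pd \<sigma> D \<inter> T. hfun (D z) u)"
proof -
  have zero: "0 \<in> \<sigma>"
    using D by (simp add: polyhedral_divisor_def pointed_rat_cone_zero)
  have "\<forall>z. \<exists>v0. v0 \<in> D z \<and> (\<forall>v\<in>D z. inner u v0 \<le> inner u v)"
    using polyhedron_with_tail_minimizer[OF _ zero u] D
    by (metis polyhedral_divisor_def)
  then obtain f where f: "\<And>z. f z \<in> D z" "\<And>z v. v \<in> D z \<Longrightarrow> inner u (f z) \<le> inner u v"
    by metis
  let ?S = "supp_pd \<sigma> D \<inter> T"
  have "0 + (\<Sum>z\<in>?S. f z) \<in> msum_pd \<sigma> D T"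
    unfolding msum_pd_def using zero f(1) by blast
  moreover have "inner u (\<Sum>z\<in>?S. f z) \<le> inner u v" if v_mem: "v \<in> msum_pd \<sigma> D T" for v
  proof -
    obtain q g where v: "v = q + (\<Sum>z\<in>?S. g z)" "q \<in> \<sigma>" "\<forall>z\<in>?S. g z \<in> D z"
      using v_mem by (auto simp: msum_pd_def)
    have "0 \<le> inner u q" using u v(2) by (auto simp: dual_cone_def)
    moreover have "(\<Sum>z\<in>?S. inner u (f z)) \<le> (\<Sum>z\<in>?S. inner u (g z))"
      using f(2) v(3) by (intro sum_mono) auto
    ultimately show ?thesis by (simp add: v(1) inner_add_right inner_sum_right)
  qed
  moreover have "inner u (\<Sum>z\<in>?S. f z) = (\<Sum>z\<in>?S. hfun (D z) u)"
    using hfun_eq_minimum[OF f] by (simp add: inner_sum_right)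
  ultimately show ?thesis using that by simp
qed

lemma hfun_msum_pd:
  assumes "polyhedral_divisor \<sigma> D" "u \<in> dual_cone \<sigma>"
  shows "hfun (msum_pd \<sigma> D T) u = (\<Sum>z\<in>supp_pd \<sigma> D \<inter> T. hfun (D z) u)"
proof (rule msum_pd_minimizer[OF assms, where T=T])
  fix v0 assume "v0 \<in> msum_pd \<sigma> D T" "\<And>v. v \<in> msum_pd \<sigma> D T \<Longrightarrow> inner u v0 \<le> inner u v"
    and "inner u v0 = (\<Sum>z\<in>supp_pd \<sigma> D \<inter> T. hfun (D z) u)"
  then show ?thesis using hfun_eq_minimum[of v0 "msum_pd \<sigma> D T" u] by simp
qed

lemma mem_dual_sigma_y_iff:
  assumes D: "polyhedral_divisor \<sigma> D"
  shows "(u, k) \<in> dual_cone (sigma_y \<sigma> D y) \<longleftrightarrow>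
           u \<in> dual_cone \<sigma> \<and> - hfun (D y) u \<le> k \<and> k \<le> hfun (msum_pd \<sigma> D (- {y})) u"
proof -
  have "(u, k) \<in> dual_cone (sigma_y \<sigma> D y) \<longleftrightarrow> u \<in> dual_cone \<sigma>
      \<and> (\<forall>v\<in>D y. - k \<le> inner u v) \<and> (\<forall>v\<in>msum_pd \<sigma> D (- {y}). k \<le> inner u v)"
    unfolding sigma_y_def dual_cone_convex_cone_hull by (auto simp: dual_cone_def ball_Un)
  also have "\<dots> \<longleftrightarrow> u \<in> dual_cone \<sigma> \<and> - hfun (D y) u \<le> k \<and> k \<le> hfun (msum_pd \<sigma> D (- {y})) u"
  proof (rule conj_cong[OF refl])
    assume u: "u \<in> dual_cone \<sigma>"
    have "polyhedron_with_tail (D y) \<sigma>" "0 \<in> \<sigma>"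
      using D by (simp_all add: polyhedral_divisor_def pointed_rat_cone_zero)
    then obtain v1 where "v1 \<in> D y" "\<And>v. v \<in> D y \<Longrightarrow> inner u v1 \<le> inner u v"
      using polyhedron_with_tail_minimizer u by blast
    then have "(\<forall>v\<in>D y. - k \<le> inner u v) \<longleftrightarrow> - k \<le> hfun (D y) u"
      by (rule le_inner_iff_le_hfun)
    moreover obtain v2 where "v2 \<in> msum_pd \<sigma> D (- {y})"
      "\<And>v. v \<in> msum_pd \<sigma> D (- {y}) \<Longrightarrow> inner u v2 \<le> inner u v"
      by (rule msum_pd_minimizer[OF D u, where T="- {y}"]) blast
    then have "(\<forall>v\<in>msum_pd \<sigma> D (- {y}). k \<le> inner u v) \<longleftrightarrow> k \<le> hfun (msum_pd \<sigma> D (- {y})) u"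
      by (rule le_inner_iff_le_hfun)
    ultimately show "(\<forall>v\<in>D y. - k \<le> inner u v) \<and> (\<forall>v\<in>msum_pd \<sigma> D (- {y}). k \<le> inner u v)
        \<longleftrightarrow> - hfun (D y) u \<le> k \<and> k \<le> hfun (msum_pd \<sigma> D (- {y})) u"
      by linarith
  qed
  finally show ?thesis .
qed

lemma Ints_fibre_dual_sigma_y:
  assumes D: "polyhedral_divisor \<sigma> D" and u: "u \<in> dual_cone \<sigma>"
  shows "{k \<in> \<int>. (u, k) \<in> dual_cone (sigma_y \<sigma> D y)}
       = real_of_int ` {- \<lfloor>hfun (D y) u\<rfloor> .. \<lfloor>hfun (msum_pd \<sigma> D (- {y})) u\<rfloor>}"
proof (intro set_eqI iffI)
  fix k assume "k \<in> {k \<in> \<int>. (u, k) \<in> dual_cone (sigma_y \<sigma> D y)}"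
  then obtain j where j: "k = of_int j" "- hfun (D y) u \<le> of_int j"
      "of_int j \<le> hfun (msum_pd \<sigma> D (- {y})) u"
    by (auto simp: mem_dual_sigma_y_iff[OF D] elim!: Ints_cases)
  have "- j \<le> \<lfloor>hfun (D y) u\<rfloor>" "j \<le> \<lfloor>hfun (msum_pd \<sigma> D (- {y})) u\<rfloor>"
    using j(2,3) by (simp_all add: le_floor_iff)
  then show "k \<in> real_of_int ` {- \<lfloor>hfun (D y) u\<rfloor> .. \<lfloor>hfun (msum_pd \<sigma> D (- {y})) u\<rfloor>}"
    using j(1) by auto
next
  fix k assume "k \<in> real_of_int ` {- \<lfloor>hfun (D y) u\<rfloor> .. \<lfloor>hfun (msum_pd \<sigma> D (- {y})) u\<rfloor>}"
  then obtain j where j: "k = of_int j" "- \<lfloor>hfun (D y) u\<rfloor> \<le> j" "j \<le> \<lfloor>hfun (msum_pd \<sigma> D (- {y})) u\<rfloor>"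
    by auto
  have "- hfun (D y) u \<le> of_int j" "of_int j \<le> hfun (msum_pd \<sigma> D (- {y})) u"
    using j(2,3) by linarith+
  then show "k \<in> {k \<in> \<int>. (u, k) \<in> dual_cone (sigma_y \<sigma> D y)}"
    using j(1) u by (simp add: mem_dual_sigma_y_iff[OF D])
qed

lemma card_Ints_fibre_dual_sigma_y:
  assumes "polyhedral_divisor \<sigma> D" "u \<in> dual_cone \<sigma>"
  shows "card {k \<in> \<int>. (u, k) \<in> dual_cone (sigma_y \<sigma> D y)}
       = nat (\<lfloor>hfun (msum_pd \<sigma> D (- {y})) u\<rfloor> + \<lfloor>hfun (D y) u\<rfloor> + 1)"
  unfolding Ints_fibre_dual_sigma_y[OF assms]
  by (subst card_image) (auto simp: inj_on_def)

lemma sum_floor_le_floor_sum: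
  fixes x :: "'b \<Rightarrow> real"
  shows "(\<Sum>i\<in>I. \<lfloor>x i\<rfloor>) \<le> \<lfloor>\<Sum>i\<in>I. x i\<rfloor>"
  by (simp add: le_floor_iff sum_mono)

lemma floor_sum_le_sum_floor_plus_card:
  fixes x :: "'b \<Rightarrow> real"
  assumes "finite I"
  shows "\<lfloor>\<Sum>i\<in>I. x i\<rfloor> \<le> (\<Sum>i\<in>I. \<lfloor>x i\<rfloor>) + int (card I)"
proof -
  have "(\<Sum>i\<in>I. x i) \<le> (\<Sum>i\<in>I. real_of_int \<lfloor>x i\<rfloor> + 1)"
    by (intro sum_mono) linarith
  then show ?thesis
    using assms by (simp add: floor_le_iff sum.distrib)
qed

lemma dimR_eq:
  assumes D: "polyhedral_divisor \<sigma> D" and u: "u \<in> dual_cone \<sigma>"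
  shows "dimR \<sigma> D u = nat ((\<Sum>z\<in>supp_pd \<sigma> D \<inter> - {y}. \<lfloor>hfun (D z) u\<rfloor>) + \<lfloor>hfun (D y) u\<rfloor> + 1)"
proof (cases "y \<in> supp_pd \<sigma> D")
  case True
  have "finite (supp_pd \<sigma> D)"
    using D by (simp add: polyhedral_divisor_def)
  then show ?thesis
    using True by (simp add: dimR_def sum.remove Diff_eq[symmetric] algebra_simps)
next
  case False
  then have "hfun (D y) u = 0" "supp_pd \<sigma> D \<inter> - {y} = supp_pd \<sigma> D"
    using D u hfun_tail_cone_eq_0[of \<sigma> u]
    by (auto simp: supp_pd_def polyhedral_divisor_def pointed_rat_cone_zero)
  then show ?thesis by (simp add: dimR_def)
qed

lemma dimR_close_to_card_fibre:
  assumes D: "polyhedral_divisor \<sigma> D" and u: "u \<in> dual_cone \<sigma>"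
  shows "\<bar>real (dimR \<sigma> D u) - real (card {k \<in> \<int>. (u, k) \<in> dual_cone (sigma_y \<sigma> D y)})\<bar>
       \<le> real (card (supp_pd \<sigma> D))"
proof -
  let ?T = "supp_pd \<sigma> D \<inter> - {y}"
  let ?s = "\<Sum>z\<in>?T. \<lfloor>hfun (D z) u\<rfloor>"
  let ?H = "\<lfloor>hfun (msum_pd \<sigma> D (- {y})) u\<rfloor>"
  have fin: "finite (supp_pd \<sigma> D)"
    using D by (simp add: polyhedral_divisor_def)
  have H: "?H = \<lfloor>\<Sum>z\<in>?T. hfun (D z) u\<rfloor>"
    by (simp add: hfun_msum_pd[OF D u])
  have finT: "finite ?T"
    using fin by simp
  have "?s \<le> ?H" "?H \<le> ?s + int (card ?T)"
    unfolding H by (rule sum_floor_le_floor_sum, rule floor_sum_le_sum_floor_plus_card[OF finT])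
  moreover have "card ?T \<le> card (supp_pd \<sigma> D)"
    using fin by (intro card_mono) auto
  ultimately have "\<bar>(?s + \<lfloor>hfun (D y) u\<rfloor> + 1) - (?H + \<lfloor>hfun (D y) u\<rfloor> + 1)\<bar> \<le> int (card (supp_pd \<sigma> D))"
    by linarith
  then have "real_of_int \<bar>(?s + \<lfloor>hfun (D y) u\<rfloor> + 1) - (?H + \<lfloor>hfun (D y) u\<rfloor> + 1)\<bar>
      \<le> real (card (supp_pd \<sigma> D))"
    by (metis of_int_le_iff of_int_of_nat_eq)
  moreover have "\<bar>real (nat p) - real (nat q)\<bar> \<le> real_of_int \<bar>p - q\<bar>" for p q
    by (cases "0 \<le> p"; cases "0 \<le> q") auto
  ultimately show ?thesis
    unfolding dimR_eq[OF D u, of y] card_Ints_fibre_dual_sigma_y[OF D u]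
    by (meson order_trans)
qed

text \<open>\<open>C\<close> comes from a point of \<open>D y\<close> and a point of the Minkowski sum of the other \<open>D z\<close>.\<close>
lemma dual_sigma_y_slope_bound:
  assumes D: "polyhedral_divisor \<sigma> D"
  obtains C where "0 \<le> C" "\<And>u k. (u, k) \<in> dual_cone (sigma_y \<sigma> D y) \<Longrightarrow> \<bar>k\<bar> \<le> C * norm u"
proof -
  have zero: "0 \<in> dual_cone \<sigma>"
    by (simp add: dual_cone_def)
  have "polyhedron_with_tail (D y) \<sigma>" "0 \<in> \<sigma>"
    using D by (simp_all add: polyhedral_divisor_def pointed_rat_cone_zero)
  then obtain v1 where v1: "v1 \<in> D y"
    using polyhedron_with_tail_minimizer zero by blast
  obtain v2 where v2: "v2 \<in> msum_pd \<sigma> D (- {y})"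
    by (rule msum_pd_minimizer[OF D zero, where T="- {y}"]) blast
  have "\<bar>k\<bar> \<le> (norm v1 + norm v2) * norm u" if "(u, k) \<in> dual_cone (sigma_y \<sigma> D y)" for u k
  proof -
    have "- k \<le> inner u v1" "k \<le> inner u v2"
      using that v1 v2 unfolding sigma_y_def dual_cone_convex_cone_hull
      by (auto simp: dual_cone_def ball_Un)
    moreover have "inner u v1 \<le> norm u * norm v1" "inner u v2 \<le> norm u * norm v2"
      by (simp_all add: norm_cauchy_schwarz)
    moreover have "0 \<le> norm u * norm v1" "0 \<le> norm u * norm v2"
      by simp_all
    ultimately show ?thesis
      unfolding distrib_right abs_le_iff mult.commute[of "norm v1"] mult.commute[of "norm v2"]
      by (intro conjI; linarith)
  qed
  then show ?thesis
    using that[of "norm v1 + norm v2"] by simp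
qed

lemma lattice_cone_dual_sigma_y:
  assumes D: "polyhedral_divisor \<sigma> D" and \<xi>: "\<xi> \<in> interior \<sigma>"
  obtains c' where "lattice_cone (dual_cone (sigma_y \<sigma> D y)) (\<xi>, 0) c'"
proof -
  obtain c where c: "0 < c" "\<And>u. u \<in> dual_cone \<sigma> \<Longrightarrow> c * norm u \<le> inner u \<xi>"
    by (rule interior_imp_dual_cone_norm_le_inner[OF \<xi>]) blast
  obtain C where C: "0 \<le> C" "\<And>u k. (u, k) \<in> dual_cone (sigma_y \<sigma> D y) \<Longrightarrow> \<bar>k\<bar> \<le> C * norm u"
    by (rule dual_sigma_y_slope_bound[OF D]) blast
  have "c / (1 + C) * norm w \<le> inner w (\<xi>, 0)" if w: "w \<in> dual_cone (sigma_y \<sigma> D y)" for w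
  proof -
    obtain u k where w_eq: "w = (u, k)" by (cases w)
    have "norm w \<le> (1 + C) * norm u"
      using norm_Pair_le[of u k] C(2)[of u k] w unfolding w_eq by (simp add: algebra_simps)
    then have "c / (1 + C) * norm w \<le> c / (1 + C) * ((1 + C) * norm u)"
      using c(1) C(1) by (intro mult_left_mono) auto
    also have "\<dots> = c * norm u"
      using C(1) by simp
    also have "\<dots> \<le> inner w (\<xi>, 0)"
      using w c(2) mem_dual_sigma_y_iff[OF D] unfolding w_eq by simp
    finally show ?thesis .
  qed
  moreover have "0 < c / (1 + C)"
    using c C by (simp add: add_pos_nonneg)
  ultimately show ?thesis
    using that closed_dual_cone convex_dual_cone cone_dual_cone lattice_cone.intro by metis
qed

section \<open>Comparison of the index characters\<close>

lemma infsum_Sigma_card_fibres: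
  fixes g :: "'a \<Rightarrow> real"
  assumes sum: "(\<lambda>(u, k). g u) summable_on Sigma A K" and fin: "\<And>u. u \<in> A \<Longrightarrow> finite (K u)"
  shows "(\<lambda>u. real (card (K u)) * g u) summable_on A"
    and "infsum (\<lambda>u. real (card (K u)) * g u) A = infsum (\<lambda>(u, k). g u) (Sigma A K)"
proof -
  have fibre: "infsum (\<lambda>k. g u) (K u) = real (card (K u)) * g u" if "u \<in> A" for u
    using fin[OF that] by simp
  show "(\<lambda>u. real (card (K u)) * g u) summable_on A"
    using summable_on_Sigma_banach[OF sum] fibre by (simp cong: summable_on_cong)
  have "infsum (\<lambda>u. real (card (K u)) * g u) A = infsum (\<lambda>u. infsum (\<lambda>k. g u) (K u)) A"
    using fibre by (intro infsum_cong) simp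
  also have "\<dots> = infsum (\<lambda>(u, k). g u) (Sigma A K)"
    using infsum_Sigma'_banach[OF sum] by simp
  finally show "infsum (\<lambda>u. real (card (K u)) * g u) A = infsum (\<lambda>(u, k). g u) (Sigma A K)" .
qed

lemma summable_on_infsum_diff_le:
  fixes a b e :: "'a \<Rightarrow> real"
  assumes b: "b summable_on A" and e: "e summable_on A"
    and close: "\<And>u. u \<in> A \<Longrightarrow> \<bar>a u - b u\<bar> \<le> B * e u"
  shows "a summable_on A" and "\<bar>infsum a A - infsum b A\<bar> \<le> B * infsum e A"
proof -
  let ?d = "\<lambda>u. a u - b u"
  have Be: "(\<lambda>u. B * e u) summable_on A"
    using e by (rule summable_on_cmult_right)
  have abs_d: "(\<lambda>u. norm (?d u)) summable_on A"
    using close by (intro Infinite_Sum.abs_summable_on_comparison_test'[OF Be]) simp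
  then have d: "?d summable_on A"
    by (rule abs_summable_summable)
  have "(\<lambda>u. b u + ?d u) summable_on A"
    by (rule summable_on_add[OF b d])
  then show "a summable_on A" by simp
  have "infsum a A - infsum b A = infsum ?d A"
    using infsum_add[OF b d] by simp
  also have "\<bar>\<dots>\<bar> \<le> infsum (\<lambda>u. norm (?d u)) A"
    using norm_infsum_bound[OF abs_d] by simp
  also have "\<dots> \<le> infsum (\<lambda>u. B * e u) A"
    using close by (intro infsum_mono[OF abs_d Be]) simp
  also have "\<dots> = B * infsum e A"
    by (rule infsum_cmult_right')
  finally show "\<bar>infsum a A - infsum b A\<bar> \<le> B * infsum e A" .
qed

lemma tendsto_power_mult_of_diff_le:
  fixes X T E :: "real \<Rightarrow> real"
  assumes T: "((\<lambda>t. t ^ Suc n * T t) \<longlongrightarrow> L) (at_right 0)"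
    and E: "((\<lambda>t. t ^ n * E t) \<longlongrightarrow> M) (at_right 0)"
    and diff: "\<And>t. 0 < t \<Longrightarrow> \<bar>X t - T t\<bar> \<le> B * E t"
  shows "((\<lambda>t. t ^ Suc n * X t) \<longlongrightarrow> L) (at_right 0)"
proof -
  have "((\<lambda>t. t ^ Suc n * (X t - T t)) \<longlongrightarrow> 0) (at_right 0)"
  proof (rule Lim_null_comparison)
    show "\<forall>\<^sub>F t in at_right 0. norm (t ^ Suc n * (X t - T t)) \<le> B * t * (t ^ n * E t)"
    proof (rule eventually_mono[OF eventually_at_right_less])
      fix t :: real assume "0 < t"
      then have "norm (t ^ Suc n * (X t - T t)) = t ^ Suc n * \<bar>X t - T t\<bar>"
        by (simp only: real_norm_def abs_mult zero_less_power abs_of_pos)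
      also have "\<dots> \<le> t ^ Suc n * (B * E t)"
        using diff \<open>0 < t\<close> by (intro mult_left_mono) auto
      also have "\<dots> = B * t * (t ^ n * E t)"
        by (simp only: power_Suc mult_ac)
      finally show "norm (t ^ Suc n * (X t - T t)) \<le> B * t * (t ^ n * E t)" .
    qed
    show "((\<lambda>t. B * t * (t ^ n * E t)) \<longlongrightarrow> 0) (at_right 0)"
      using tendsto_mult[OF tendsto_mult[OF tendsto_const[of B] tendsto_ident_at] E] by simp
  qed
  from tendsto_add[OF T this] show ?thesis
    by (simp add: right_diff_distrib)
qed

lemma integer_lattice_vec: "(integer_lattice :: (real^'r) set) = lattice_M"
  by (auto simp: integer_lattice_def lattice_M_def int_vec_def Basis_vec_def inner_axis)

lemma integer_lattice_prod: "(integer_lattice :: ((real^'r) \<times> real) set) = lattice_MZ"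
  by (auto simp: integer_lattice_def lattice_MZ_def int_vec_def Basis_prod_def Basis_vec_def inner_axis)

lemma index_char_X_approx_toric:
  fixes \<sigma> :: "(real^'r) set"
  assumes D: "polyhedral_divisor \<sigma> D" and \<xi>: "\<xi> \<in> interior \<sigma>" and t: "0 < t"
  shows "(\<lambda>u. real (dimR \<sigma> D u) * exp (- t * inner u \<xi>)) summable_on (dual_cone \<sigma> \<inter> lattice_M)"
    and "(\<lambda>w. exp (- t * inner w (\<xi>, 0))) summable_on (dual_cone (sigma_y \<sigma> D y) \<inter> lattice_MZ)"
    and "\<bar>index_char_X \<sigma> D \<xi> t - index_char_toric (sigma_y \<sigma> D y) (\<xi>, 0) t\<bar>
         \<le> real (card (supp_pd \<sigma> D)) * infsum (\<lambda>u. exp (- t * inner u \<xi>)) (dual_cone \<sigma> \<inter> lattice_M)"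
proof -
  let ?e = "\<lambda>u. exp (- t * inner u \<xi>)"
  define A where "A = dual_cone \<sigma> \<inter> lattice_M"
  define K where "K u = {k \<in> \<int>. (u, k) \<in> dual_cone (sigma_y \<sigma> D y)}" for u
  obtain c where "lattice_cone (dual_cone \<sigma>) \<xi> c"
    by (rule interior_imp_lattice_cone_dual_cone[OF \<xi>])
  from lattice_cone.summable_on_exp_lattice[OF this t] have e: "?e summable_on A"
    by (simp add: A_def integer_lattice_vec)
  obtain c' where "lattice_cone (dual_cone (sigma_y \<sigma> D y)) (\<xi>, 0) c'"
    by (rule lattice_cone_dual_sigma_y[OF D \<xi>])
  from lattice_cone.summable_on_exp_lattice[OF this t]
  show toric: "(\<lambda>w. exp (- t * inner w (\<xi>, 0))) summable_on (dual_cone (sigma_y \<sigma> D y) \<inter> lattice_MZ)"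
    by (simp add: integer_lattice_prod)
  have Sigma: "dual_cone (sigma_y \<sigma> D y) \<inter> lattice_MZ = Sigma A K"
    by (auto simp: A_def K_def lattice_MZ_def lattice_M_def mem_dual_sigma_y_iff[OF D])
  have fibre: "(\<lambda>w. exp (- t * inner w (\<xi>, 0))) = (\<lambda>(u, k). ?e u)"
    by (simp add: case_prod_unfold inner_Pair_0)
  have fin: "finite (K u)" if "u \<in> A" for u
    using that by (simp add: A_def K_def Ints_fibre_dual_sigma_y[OF D])
  note card_sum = infsum_Sigma_card_fibres[OF toric[unfolded Sigma fibre] fin]
  have "\<bar>real (dimR \<sigma> D u) * ?e u - real (card (K u)) * ?e u\<bar> \<le> real (card (supp_pd \<sigma> D)) * ?e u"
    if "u \<in> A" for u
    using dimR_close_to_card_fibre[OF D, of u y] that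
    by (simp add: A_def K_def abs_mult flip: left_diff_distrib)
  note approx = summable_on_infsum_diff_le[OF card_sum(1) e this]
  show "(\<lambda>u. real (dimR \<sigma> D u) * ?e u) summable_on (dual_cone \<sigma> \<inter> lattice_M)"
    using approx(1) by (simp add: A_def)
  show "\<bar>index_char_X \<sigma> D \<xi> t - index_char_toric (sigma_y \<sigma> D y) (\<xi>, 0) t\<bar>
      \<le> real (card (supp_pd \<sigma> D)) * infsum ?e (dual_cone \<sigma> \<inter> lattice_M)"
    using approx(2) card_sum(2) unfolding index_char_X_def index_char_toric_def Sigma fibre
    by (simp add: A_def)
qed

theorem mainTheorem4:
  fixes \<sigma> :: "(real^'r) set" and D :: "complex option \<Rightarrow> (real^'r) set"
    and y :: "complex option" and \<xi> :: "real^'r"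
  assumes "polyhedral_divisor \<sigma> D" and "proper_pd \<sigma> D" and "\<xi> \<in> interior \<sigma>"
  shows "\<exists>L::real.
     (\<forall>t>0. (\<lambda>u. real (dimR \<sigma> D u) * exp (- t * inner u \<xi>)) summable_on (dual_cone \<sigma> \<inter> lattice_M))
   \<and> (\<forall>t>0. (\<lambda>w. exp (- t * inner w (\<xi>, 0))) summable_on (dual_cone (sigma_y \<sigma> D y) \<inter> lattice_MZ))
   \<and> ((\<lambda>t. t ^ (CARD('r) + 1) * index_char_X \<sigma> D \<xi> t / fact CARD('r)) \<longlongrightarrow> L) (at_right 0)
   \<and> ((\<lambda>t. t ^ (CARD('r) + 1) * index_char_toric (sigma_y \<sigma> D y) (\<xi>, 0) t / fact CARD('r)) \<longlongrightarrow> L) (at_right 0)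
   \<and> L = real (CARD('r) + 1) *
        measure lborel {w \<in> dual_cone (sigma_y \<sigma> D y). inner w (\<xi>, 0) \<le> 1}"
proof -
  let ?P = "{w \<in> dual_cone (sigma_y \<sigma> D y). inner w (\<xi>, 0) \<le> 1}"
  obtain c where "lattice_cone (dual_cone \<sigma>) \<xi> c"
    by (rule interior_imp_lattice_cone_dual_cone[OF assms(3)])
  from lattice_cone.lattice_sum_asymptotics[OF this]
  have E: "((\<lambda>t. t ^ CARD('r) * infsum (\<lambda>u. exp (- t * inner u \<xi>)) (dual_cone \<sigma> \<inter> lattice_M))
      \<longlongrightarrow> fact CARD('r) * measure lborel {u \<in> dual_cone \<sigma>. inner u \<xi> \<le> 1}) (at_right 0)"
    by (simp add: integer_lattice_vec)
  obtain c' where "lattice_cone (dual_cone (sigma_y \<sigma> D y)) (\<xi>, 0) c'"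
    by (rule lattice_cone_dual_sigma_y[OF assms(1,3)])
  from lattice_cone.lattice_sum_asymptotics[OF this]
  have T: "((\<lambda>t. t ^ Suc CARD('r) * index_char_toric (sigma_y \<sigma> D y) (\<xi>, 0) t)
      \<longlongrightarrow> fact (Suc CARD('r)) * measure lborel ?P) (at_right 0)"
    by (simp add: integer_lattice_prod index_char_toric_def)
  have X: "((\<lambda>t. t ^ Suc CARD('r) * index_char_X \<sigma> D \<xi> t)
      \<longlongrightarrow> fact (Suc CARD('r)) * measure lborel ?P) (at_right 0)"
    using index_char_X_approx_toric(3)[OF assms(1,3)] by (intro tendsto_power_mult_of_diff_le[OF T E])
  have "fact (Suc CARD('r)) * measure lborel ?P / fact CARD('r) = real (CARD('r) + 1) * measure lborel ?P"
    by simp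
  then show ?thesis
    using index_char_X_approx_toric(1,2)[OF assms(1,3)]
      tendsto_divide[OF X tendsto_const, of "fact CARD('r)"]
      tendsto_divide[OF T tendsto_const, of "fact CARD('r)"]
    by (intro exI[of _ "real (CARD('r) + 1) * measure lborel ?P"]) simp
qed

end
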